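(* Let $\Omega_D := \{x \in \mathbb{R}^2 : |x| \le 1\}$ and $\Omega_S := [-1,1]\times[0,2\pi)$. Let $\mathcal{E} \in C^2(\mathbb{R})$ satisfy $\mathcal{E}(x) = \exp(-x)$ for all $x \ge 0$, with $|\mathcal{E}|$, $|\mathcal{E}'|$ and $|\mathcal{E}''|$ bounded on $\mathbb{R}$. For $w \in L_1(\mathbb{R})$ define $$F(f)(s,\theta) := \int_{\mathbb{R}} w(r-s)\, \mathcal{E}\Big(\tfrac{1}{2}(Rf)(r,\theta)\Big)\, dr, \qquad (s,\theta) \in \Omega_S,$$ for $f \in L_2(\Omega_D)$, where $R$ is the Radon transform. Then $F : L_2(\Omega_D) \to L_2(\Omega_S)$ is well-defined, i.e. $F(f) \in L_2(\Omega_S)$ for every $f \in L_2(\Omega_D)$.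
   Context: Functions $f \in L_2(\Omega_D)$ are extended by zero outside $\Omega_D$. The Radon transform is $(Rf)(s,\theta) = \int_{\mathbb{R}} f(s\,u(\theta) + \sigma\, u(\theta)^\perp)\, d\sigma$ for $s \in \mathbb{R}$, $\theta \in [0,2\pi)$, where $u(\theta) = (\cos\theta, \sin\theta)^T$ and $u(\theta)^\perp$ is the unit vector perpendicular to it. $R$ is a bounded linear operator from $L_2(\Omega_D)$ to $L_2(\mathbb{R}\times[0,2\pi))$ (and to $L_2(\Omega_S)$), and $(Rf)(s,\theta) = 0$ for $|s|>1$. *)

theory Defs
  imports "HOL-Analysis.Analysis"
begin

definition OmegaD :: "(real \<times> real) set" where
  "OmegaD = cball 0 1"

definition OmegaS :: "(real \<times> real) set" where
  "OmegaS = {-1..1} \<times> {0..<2*pi}"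

definition udir :: "real \<Rightarrow> real \<times> real" where
  "udir \<theta> = (cos \<theta>, sin \<theta>)"

definition udir_perp :: "real \<Rightarrow> real \<times> real" where
  "udir_perp \<theta> = (- sin \<theta>, cos \<theta>)"

definition ext0 :: "(real \<times> real \<Rightarrow> real) \<Rightarrow> real \<times> real \<Rightarrow> real" where
  "ext0 f x = indicator OmegaD x * f x"

definition radon :: "(real \<times> real \<Rightarrow> real) \<Rightarrow> real \<Rightarrow> real \<Rightarrow> real" where
  "radon f s \<theta> = (\<integral>\<sigma>. ext0 f (s *\<^sub>R udir \<theta> + \<sigma> *\<^sub>R udir_perp \<theta>) \<partial>lborel)"

definition Fop :: "(real \<Rightarrow> real) \<Rightarrow> (real \<Rightarrow> real) \<Rightarrow> (real \<times> real \<Rightarrow> real) \<Rightarrow> real \<times> real \<Rightarrow> real" where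
  "Fop w E f = (\<lambda>(s, \<theta>). \<integral>r. w (r - s) * E (radon f r \<theta> / 2) \<partial>lborel)"

definition in_L2 :: "(real \<times> real) set \<Rightarrow> (real \<times> real \<Rightarrow> real) \<Rightarrow> bool" where
  "in_L2 \<Omega> g \<longleftrightarrow> set_borel_measurable lborel \<Omega> g \<and> set_integrable lborel \<Omega> (\<lambda>x. (g x)\<^sup>2)"

end

theory Submission
  imports Defs
begin

text \<open>The operator is bounded pointwise, \<open>\<bar>F(f)(s,\<theta>)\<bar> \<le> sup \<bar>\<E>\<bar> \<cdot> \<parallel>w\<parallel>\<^sub>1\<close>, uniformly in \<open>f\<close>,
  because \<open>\<E>\<close> is bounded and translating \<open>w\<close> does not change its \<open>L\<^sub>1\<close> norm. Since \<open>\<Omega>\<^sub>S\<close> has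
  finite measure, \<open>F(f)\<close> is square-integrable on it once it is measurable, and measurability follows
  from Fubini-type measurability of parametric integrals, applied once to the Radon transform and
  once to \<open>F\<close>.\<close>

lemma sets_borel_pair_lborel:
  "sets (borel \<Otimes>\<^sub>M (lborel :: real measure)) = sets (borel :: ('a::second_countable_topology \<times> real) measure)"
  by (metis borel_prod sets_lborel sets_pair_measure_cong)

lemma borel_measurable_parametric_integral:
  fixes g :: "'a::second_countable_topology \<Rightarrow> real \<Rightarrow> real"
  assumes "(\<lambda>y. g (fst y) (snd y)) \<in> borel_measurable borel"
  shows "(\<lambda>x. \<integral>r. g x r \<partial>lborel) \<in> borel_measurable borel"
proof -
  have "case_prod g \<in> borel_measurable (borel \<Otimes>\<^sub>M lborel)"
    using assms by (subst measurable_cong_sets[OF sets_borel_pair_lborel refl]) (simp add: case_prod_beta')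
  from lborel.borel_measurable_lebesgue_integral[OF this] show ?thesis .
qed

lemma borel_measurable_ext0:
  assumes "f \<in> borel_measurable borel"
  shows "ext0 f \<in> borel_measurable borel"
proof -
  have "OmegaD \<in> sets borel"
    unfolding OmegaD_def by (simp add: borel_closed)
  with assms show ?thesis
    unfolding ext0_def[abs_def] by (intro borel_measurable_times borel_measurable_indicator) auto
qed

lemma borel_measurable_radon:
  assumes "f \<in> borel_measurable borel"
  shows "(\<lambda>x. radon f (fst x) (snd x)) \<in> borel_measurable borel"
  unfolding radon_def
proof (rule borel_measurable_parametric_integral)
  have "continuous_on UNIV
      (\<lambda>y::(real \<times> real) \<times> real. fst (fst y) *\<^sub>R udir (snd (fst y)) + snd y *\<^sub>R udir_perp (snd (fst y)))"
    unfolding udir_def udir_perp_def by (intro continuous_intros)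
  from measurable_comp[OF borel_measurable_continuous_onI[OF this] borel_measurable_ext0[OF assms]]
  show "(\<lambda>y. ext0 f (fst (fst y) *\<^sub>R udir (snd (fst y)) + snd y *\<^sub>R udir_perp (snd (fst y))))
      \<in> borel_measurable borel"
    by (simp add: o_def)
qed

lemma borel_measurable_Fop:
  assumes f: "f \<in> borel_measurable borel"
    and w: "w \<in> borel_measurable borel" and E: "E \<in> borel_measurable borel"
  shows "Fop w E f \<in> borel_measurable borel"
proof -
  have "(\<lambda>x. Fop w E f x) = (\<lambda>x. \<integral>r. w (r - fst x) * E (radon f r (snd x) / 2) \<partial>lborel)"
    unfolding Fop_def by (simp add: case_prod_beta')
  also have "\<dots> \<in> borel_measurable borel"
  proof (rule borel_measurable_parametric_integral, rule borel_measurable_times)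
    show "(\<lambda>y::(real \<times> real) \<times> real. w (snd y - fst (fst y))) \<in> borel_measurable borel"
      using measurable_comp[OF borel_measurable_continuous_onI w, of "\<lambda>y. snd y - fst (fst y)"]
      by (simp add: o_def continuous_intros)
    have "(\<lambda>y::(real \<times> real) \<times> real. radon f (snd y) (snd (fst y))) \<in> borel_measurable borel"
      using measurable_comp[OF _ borel_measurable_radon[OF f], of "\<lambda>y. (snd y, snd (fst y))" borel]
      by (simp add: o_def borel_measurable_continuous_onI continuous_intros)
    from measurable_comp[OF borel_measurable_divide[OF this borel_measurable_const] E]
    show "(\<lambda>y::(real \<times> real) \<times> real. E (radon f (snd y) (snd (fst y)) / 2)) \<in> borel_measurable borel"
      by (simp add: o_def)
  qed
  finally show ?thesis .
qed

lemma abs_integral_translate_weight_le: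
  fixes w h :: "real \<Rightarrow> real"
  assumes w: "integrable lborel w" and h: "\<And>r. \<bar>h r\<bar> \<le> B"
  shows "\<bar>\<integral>r. w (r - s) * h r \<partial>lborel\<bar> \<le> B * (\<integral>r. \<bar>w r\<bar> \<partial>lborel)"
proof (cases "integrable lborel (\<lambda>r. w (r - s) * h r)")
  case True
  have w_shift: "integrable lborel (\<lambda>r. \<bar>w (r - s)\<bar>)"
    using lborel_integrable_real_affine[OF integrable_abs[OF w], of 1 "-s"] by simp
  have "norm (\<integral>r. w (r - s) * h r \<partial>lborel) \<le> (\<integral>r. \<bar>w (r - s)\<bar> * B \<partial>lborel)"
    using h by (intro Bochner_Integration.integral_norm_bound_integral[OF True integrable_mult_left[OF w_shift]])
      (simp add: abs_mult mult_left_mono)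
  also have "\<dots> = B * (\<integral>r. \<bar>w r\<bar> \<partial>lborel)"
    using lborel_integral_real_affine[of 1 "\<lambda>r. \<bar>w r\<bar>" "-s"] by simp
  finally show ?thesis
    by simp
next
  case False
  have "0 \<le> B" using h[of 0] by linarith
  with False show ?thesis
    by (simp add: not_integrable_integral_eq)
qed

lemma set_integrable_bounded_on_bounded_set:
  fixes g :: "'a::euclidean_space \<Rightarrow> real"
  assumes \<Omega>: "\<Omega> \<in> sets borel" "bounded \<Omega>"
    and g: "g \<in> borel_measurable borel" and bound: "\<And>x. x \<in> \<Omega> \<Longrightarrow> \<bar>g x\<bar> \<le> C"
  shows "set_integrable lborel \<Omega> g"
  unfolding set_integrable_def
proof (rule integrableI_bounded_set[where B = C])
  show "\<Omega> \<in> sets lborel"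
    using \<Omega>(1) by simp
  show "emeasure lborel \<Omega> < \<infinity>"
    using emeasure_bounded_finite[OF \<Omega>(2)] .
  show "(\<lambda>x. indicator \<Omega> x *\<^sub>R g x) \<in> borel_measurable lborel"
    using \<Omega> g by measurable
  show "AE x in lborel. x \<in> \<Omega> \<longrightarrow> norm (indicator \<Omega> x *\<^sub>R g x) \<le> C"
    using bound by (intro AE_I2) simp
  show "AE x in lborel. x \<notin> \<Omega> \<longrightarrow> indicator \<Omega> x *\<^sub>R g x = 0"
    by (intro AE_I2) simp
qed

lemma in_L2_if_bounded:
  assumes "\<Omega> \<in> sets borel" "bounded \<Omega>"
    and g: "g \<in> borel_measurable borel" and "\<And>x. \<bar>g x\<bar> \<le> C"
  shows "in_L2 \<Omega> g"
  unfolding in_L2_def set_borel_measurable_def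
proof
  show "(\<lambda>x. indicator \<Omega> x *\<^sub>R g x) \<in> borel_measurable lborel"
    using assms by measurable
  have "\<bar>(g x)\<^sup>2\<bar> \<le> C\<^sup>2" for x
    using \<open>\<bar>g x\<bar> \<le> C\<close> by (metis abs_ge_zero abs_power2 power2_abs power_mono)
  then show "set_integrable lborel \<Omega> (\<lambda>x. (g x)\<^sup>2)"
    using assms by (intro set_integrable_bounded_on_bounded_set) auto
qed

lemma OmegaS_sets_borel: "OmegaS \<in> sets borel"
proof -
  have "{-1..1::real} \<times> {0..<2*pi} \<in> sets (borel \<Otimes>\<^sub>M borel)"
    by (intro pair_measureI) auto
  then show ?thesis
    unfolding OmegaS_def borel_prod .
qed

lemma bounded_OmegaS: "bounded OmegaS"
  unfolding OmegaS_def
  by (intro bounded_Times bounded_closed_interval bounded_subset[OF bounded_closed_interval, of _ 0 "2*pi"]) auto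

theorem proposition1:
  fixes E E' E'' w :: "real \<Rightarrow> real" and f :: "real \<times> real \<Rightarrow> real"
  assumes "\<And>x. (E has_real_derivative E' x) (at x)"
      and "\<And>x. (E' has_real_derivative E'' x) (at x)"
      and "continuous_on UNIV E''"
      and "\<And>x. x \<ge> 0 \<Longrightarrow> E x = exp (- x)"
      and "bounded (range E)" and "bounded (range E')" and "bounded (range E'')"
      and "integrable lborel w"
      and "f \<in> borel_measurable borel"
      and "in_L2 OmegaD f"
  shows "in_L2 OmegaS (Fop w E f)"
proof -
  have "continuous_on UNIV E"
    using assms(1) by (meson DERIV_isCont continuous_at_imp_continuous_on)
  moreover have "w \<in> borel_measurable borel"
    using borel_measurable_integrable[OF assms(8)] by (simp add: measurable_cong_sets[OF sets_lborel refl])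
  ultimately have "Fop w E f \<in> borel_measurable borel"
    using borel_measurable_Fop[OF assms(9)] borel_measurable_continuous_onI by blast
  moreover obtain B where "\<And>x. \<bar>E x\<bar> \<le> B"
    using assms(5) unfolding bounded_iff by auto
  then have "\<bar>Fop w E f x\<bar> \<le> B * (\<integral>r. \<bar>w r\<bar> \<partial>lborel)" for x
    unfolding Fop_def using abs_integral_translate_weight_le[OF assms(8)] by (simp split: prod.split)
  ultimately show ?thesis
    by (intro in_L2_if_bounded[OF OmegaS_sets_borel bounded_OmegaS])
qed

end
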